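(* Let $k$ be a field, $V$ a $k$-vector space, $N\geq 2$, $R\subseteq V^{\otimes N}$ a subspace, $A=T(V)/(R)$, and $M$ an $A$-bimodule. Let $M^{\ast}=\mathrm{Hom}_k(M,k)$ with $A$-bimodule structure $(a.u.a')(m)=u(a'ma)$. For $p\ge 0$ define $\eta_p:\mathrm{Hom}_k(M\otimes W_{\nu(p)},k)\to \mathrm{Hom}_k(W_{\nu(p)},M^{\ast})$ by $\eta_p(\varphi)(x_1\dots x_{\nu(p)})(m)=\varphi(m\otimes x_1\dots x_{\nu(p)})$. Then $\eta=\bigoplus_p\eta_p$ is an isomorphism of cochain complexes from $C=\big(\bigoplus_p (M\otimes W_{\nu(p)})^{\ast}, b_K^{\ast}\big)$, where $b_K^{\ast}(\phi)=-(-1)^p\phi\circ b_K$ for $\phi\in(M\otimes W_{\nu(p)})^\ast$, to the Koszul cochain complex $(\mathrm{Hom}_k(W_{\nu(\bullet)},M^{\ast}),b_K)$, and it induces a graded linear isomorphism $H(\eta):H^{\bullet}(C)\to \mathrm{HK}^{\bullet}(A,M^{\ast})$ which is natural in the $A$-bimodule $M$.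
   Context: $k$ field, $V$ a $k$-vector space, $N\ge 2$, $R\subseteq V^{\otimes N}$, $A=T(V)/(R)$. $W_0=k$, $W_p=V^{\otimes p}$ for $1\le p\le N-1$, $W_p=\bigcap_{i+N+j=p}V^{\otimes i}\otimes R\otimes V^{\otimes j}$ for $p\ge N$; $\nu(2p')=Np'$, $\nu(2p'+1)=Np'+1$. Elements of $W_p$ are written $x_1\dots x_p$ (a sum of such tensors, $x_i\in V$, acting on bimodules via their images in $A$). Koszul chain differential on $M\otimes W_{\nu(q)}$: for $q=2q'+1$, $b_K(m\otimes x_1\dots x_{Nq'+1})=mx_1\otimes x_2\dots x_{Nq'+1}-x_{Nq'+1}m\otimes x_1\dots x_{Nq'}$; for $q=2q'\ge2$, $b_K(m\otimes x_1\dots x_{Nq'})=\sum_{i=0}^{N-1}x_{i+Nq'-N+2}\dots x_{Nq'}mx_1\dots x_i\otimes x_{i+1}\dots x_{i+Nq'-N+1}$. Koszul cochain differential on $\mathrm{Hom}_k(W_{\nu(p)},P)$ for a bimodule $P$: for $p=2p'$, $b_K(f)(x_1\dots x_{Np'+1})=f(x_1\dots x_{Np'})x_{Np'+1}-x_1f(x_2\dots x_{Np'+1})$; for $p=2p'+1$, $b_K(f)(x_1\dots x_{N(p'+1)})=\sum_{i=0}^{N-1}x_1\dots x_if(x_{i+1}\dots x_{i+Np'+1})x_{i+Np'+2}\dots x_{N(p'+1)}$. Its cohomology is $\mathrm{HK}^\bullet(A,P)$. *)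

theory Defs
  imports Complex_Main "HOL-Library.Function_Algebras"
begin

text \<open>The vector space V is the free k-vector space
on a (basis) type 'x; an element of the tensor power V^(tensor n) is a finitely supported
function from words (lists over 'x) of length n to 'k, the basis word x1...xn corresponding
to the list [x1,...,xn].  Likewise an element of M tensor V^(tensor n) is a finitely supported
function from words of length n to M.  Linear maps defined on a subspace S are represented
by functions that vanish outside S.\<close>

definition fsupp :: "('a \<Rightarrow> 'b::zero) \<Rightarrow> 'a set" where
  "fsupp f = {u. f u \<noteq> 0}"

definition Tn :: "nat \<Rightarrow> ('x list \<Rightarrow> 'b::zero) set" where
  "Tn n = {f. finite (fsupp f) \<and> (\<forall>u\<in>fsupp f. length u = n)}"

definition sc :: "'k::times \<Rightarrow> ('a \<Rightarrow> 'k) \<Rightarrow> 'a \<Rightarrow> 'k" where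
  "sc c f = (\<lambda>u. c * f u)"

definition tprod :: "('x list \<Rightarrow> 'k::comm_ring_1) \<Rightarrow> ('x list \<Rightarrow> 'k) \<Rightarrow> 'x list \<Rightarrow> 'k" where
  "tprod f g = (\<lambda>u. \<Sum>i\<le>length u. f (take i u) * g (drop i u))"

definition tsubspace :: "nat \<Rightarrow> ('x list \<Rightarrow> 'k::field) set \<Rightarrow> bool" where
  "tsubspace N R \<longleftrightarrow> R \<subseteq> Tn N \<and> module.subspace sc R"

definition Wsp :: "nat \<Rightarrow> ('x list \<Rightarrow> 'k::field) set \<Rightarrow> nat \<Rightarrow> ('x list \<Rightarrow> 'k) set" where
  "Wsp N R p = (if p < N then Tn p else
     (\<Inter>i\<in>{0..p - N}. module.span sc
        {tprod (tprod f r) g | f r g. f \<in> Tn i \<and> r \<in> R \<and> g \<in> Tn (p - N - i)}))"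

definition nu :: "nat \<Rightarrow> nat \<Rightarrow> nat" where
  "nu N q = (if even q then N * (q div 2) else N * (q div 2) + 1)"

definition lin_on :: "('k \<Rightarrow> 'a::plus \<Rightarrow> 'a) \<Rightarrow> ('k \<Rightarrow> 'b::plus \<Rightarrow> 'b) \<Rightarrow> 'a set \<Rightarrow> ('a \<Rightarrow> 'b) \<Rightarrow> bool" where
  "lin_on s1 s2 S f \<longleftrightarrow> (\<forall>x\<in>S. \<forall>y\<in>S. f (x + y) = f x + f y) \<and> (\<forall>c. \<forall>x\<in>S. f (s1 c x) = s2 c (f x))"

definition lword :: "('x \<Rightarrow> 'm \<Rightarrow> 'm) \<Rightarrow> 'x list \<Rightarrow> 'm \<Rightarrow> 'm" where
  "lword lact u m = foldr lact u m"

definition rword :: "('x \<Rightarrow> 'm \<Rightarrow> 'm) \<Rightarrow> 'x list \<Rightarrow> 'm \<Rightarrow> 'm" where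
  "rword ract u m = fold ract u m"

text \<open>An A-bimodule, A = T(V)/(R): a k-vector space with commuting k-linear left and right
actions of the generators (i.e. a T(V)-bimodule) on which R acts by zero on both sides
(equivalently the ideal (R) acts by zero).\<close>
definition bimod :: "nat \<Rightarrow> ('x list \<Rightarrow> 'k::field) set \<Rightarrow> ('k \<Rightarrow> 'm::ab_group_add \<Rightarrow> 'm)
     \<Rightarrow> ('x \<Rightarrow> 'm \<Rightarrow> 'm) \<Rightarrow> ('x \<Rightarrow> 'm \<Rightarrow> 'm) \<Rightarrow> bool" where
  "bimod N R smult lact ract \<longleftrightarrow> vector_space smult
     \<and> (\<forall>x. lin_on smult smult UNIV (lact x) \<and> lin_on smult smult UNIV (ract x))
     \<and> (\<forall>x y m. lact x (ract y m) = ract y (lact x m))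
     \<and> (\<forall>r\<in>R. \<forall>m. (\<Sum>u\<in>fsupp r. smult (r u) (lword lact u m)) = 0
                 \<and> (\<Sum>u\<in>fsupp r. smult (r u) (rword ract u m)) = 0)"

definition bimod_hom :: "('k \<Rightarrow> 'm \<Rightarrow> 'm) \<Rightarrow> ('x \<Rightarrow> 'm \<Rightarrow> 'm) \<Rightarrow> ('x \<Rightarrow> 'm \<Rightarrow> 'm)
     \<Rightarrow> ('k \<Rightarrow> 'n::plus \<Rightarrow> 'n) \<Rightarrow> ('x \<Rightarrow> 'n \<Rightarrow> 'n) \<Rightarrow> ('x \<Rightarrow> 'n \<Rightarrow> 'n) \<Rightarrow> ('m::plus \<Rightarrow> 'n) \<Rightarrow> bool" where
  "bimod_hom s1 l1 r1 s2 l2 r2 g \<longleftrightarrow> lin_on s1 s2 UNIV g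
     \<and> (\<forall>x m. g (l1 x m) = l2 x (g m) \<and> g (r1 x m) = r2 x (g m))"

definition mt :: "('k \<Rightarrow> 'm \<Rightarrow> 'm) \<Rightarrow> 'm \<Rightarrow> ('x list \<Rightarrow> 'k) \<Rightarrow> 'x list \<Rightarrow> 'm" where
  "mt smult m w = (\<lambda>u. smult (w u) m)"

definition msc :: "('k \<Rightarrow> 'm \<Rightarrow> 'm) \<Rightarrow> 'k \<Rightarrow> ('x list \<Rightarrow> 'm) \<Rightarrow> 'x list \<Rightarrow> 'm" where
  "msc smult c t = (\<lambda>u. smult c (t u))"

definition MW :: "nat \<Rightarrow> ('x list \<Rightarrow> 'k::field) set \<Rightarrow> ('k \<Rightarrow> 'm::ab_group_add \<Rightarrow> 'm) \<Rightarrow> nat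
     \<Rightarrow> ('x list \<Rightarrow> 'm) set" where
  "MW N R smult p = module.span (msc smult) {mt smult m w | m w. w \<in> Wsp N R p}"

definition single :: "'a \<Rightarrow> 'b::zero \<Rightarrow> 'a \<Rightarrow> 'b" where
  "single a b = (\<lambda>u. if u = a then b else 0)"

definition bKc_basis :: "nat \<Rightarrow> ('x \<Rightarrow> 'm::ab_group_add \<Rightarrow> 'm) \<Rightarrow> ('x \<Rightarrow> 'm \<Rightarrow> 'm) \<Rightarrow> nat
     \<Rightarrow> 'x list \<Rightarrow> 'm \<Rightarrow> 'x list \<Rightarrow> 'm" where
  "bKc_basis N lact ract q w m =
     (if odd q then single (tl w) (ract (hd w) m) - single (butlast w) (lact (last w) m)
      else (\<Sum>i<N. single (take (length w - N + 1) (drop i w))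
                (lword lact (drop (i + length w - N + 1) w) (rword ract (take i w) m))))"

definition bK_chain :: "nat \<Rightarrow> ('x \<Rightarrow> 'm::ab_group_add \<Rightarrow> 'm) \<Rightarrow> ('x \<Rightarrow> 'm \<Rightarrow> 'm) \<Rightarrow> nat
     \<Rightarrow> ('x list \<Rightarrow> 'm) \<Rightarrow> 'x list \<Rightarrow> 'm" where
  "bK_chain N lact ract q t = (\<Sum>w\<in>fsupp t. bKc_basis N lact ract q w (t w))"

definition Cdual :: "nat \<Rightarrow> ('x list \<Rightarrow> 'k::field) set \<Rightarrow> ('k \<Rightarrow> 'm::ab_group_add \<Rightarrow> 'm) \<Rightarrow> nat
     \<Rightarrow> (('x list \<Rightarrow> 'm) \<Rightarrow> 'k) set" where
  "Cdual N R smult p = {\<phi>. lin_on (msc smult) (*) (MW N R smult (nu N p)) \<phi>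
                         \<and> (\<forall>t. t \<notin> MW N R smult (nu N p) \<longrightarrow> \<phi> t = 0)}"

definition dC :: "nat \<Rightarrow> ('x list \<Rightarrow> 'k::field) set \<Rightarrow> ('k \<Rightarrow> 'm::ab_group_add \<Rightarrow> 'm)
     \<Rightarrow> ('x \<Rightarrow> 'm \<Rightarrow> 'm) \<Rightarrow> ('x \<Rightarrow> 'm \<Rightarrow> 'm) \<Rightarrow> nat \<Rightarrow> (('x list \<Rightarrow> 'm) \<Rightarrow> 'k) \<Rightarrow> ('x list \<Rightarrow> 'm) \<Rightarrow> 'k" where
  "dC N R smult lact ract p \<phi> = (\<lambda>t. if t \<in> MW N R smult (nu N (Suc p))
       then - ((-1) ^ p) * \<phi> (bK_chain N lact ract (Suc p) t) else 0)"

definition slice :: "'x list \<Rightarrow> 'x list \<Rightarrow> ('x list \<Rightarrow> 'k) \<Rightarrow> 'x list \<Rightarrow> 'k" where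
  "slice a c w = (\<lambda>u. w (a @ u @ c))"

definition bK_cochain :: "nat \<Rightarrow> ('x list \<Rightarrow> 'k::field) set \<Rightarrow> ('x \<Rightarrow> 'p::ab_group_add \<Rightarrow> 'p)
     \<Rightarrow> ('x \<Rightarrow> 'p \<Rightarrow> 'p) \<Rightarrow> nat \<Rightarrow> (('x list \<Rightarrow> 'k) \<Rightarrow> 'p) \<Rightarrow> ('x list \<Rightarrow> 'k) \<Rightarrow> 'p" where
  "bK_cochain N R lP rP p f w =
     (if w \<notin> Wsp N R (nu N (Suc p)) then 0
      else if even p then
        (\<Sum>x\<in>last ` fsupp w. rP x (f (slice [] [x] w)))
        - (\<Sum>x\<in>hd ` fsupp w. lP x (f (slice [x] [] w)))
      else (\<Sum>i<N. \<Sum>(a, c)\<in>(\<lambda>u. (take i u, drop (i + nu N p) u)) ` fsupp w.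
               lword lP a (rword rP c (f (slice a c w)))))"

text \<open>M^* = Hom_k(M,k) with (a.u.a')(m) = u(a' m a)\<close>
definition Mdual :: "('k::field \<Rightarrow> 'm \<Rightarrow> 'm) \<Rightarrow> ('m::plus \<Rightarrow> 'k) set" where
  "Mdual smult = {u. lin_on smult (*) UNIV u}"

definition dual_lact :: "('x \<Rightarrow> 'm \<Rightarrow> 'm) \<Rightarrow> 'x \<Rightarrow> ('m \<Rightarrow> 'k) \<Rightarrow> 'm \<Rightarrow> 'k" where
  "dual_lact ract x u = (\<lambda>m. u (ract x m))"

definition dual_ract :: "('x \<Rightarrow> 'm \<Rightarrow> 'm) \<Rightarrow> 'x \<Rightarrow> ('m \<Rightarrow> 'k) \<Rightarrow> 'm \<Rightarrow> 'k" where
  "dual_ract lact x u = (\<lambda>m. u (lact x m))"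

definition Kcoch :: "nat \<Rightarrow> ('x list \<Rightarrow> 'k::field) set \<Rightarrow> ('k \<Rightarrow> 'm::ab_group_add \<Rightarrow> 'm) \<Rightarrow> nat
     \<Rightarrow> (('x list \<Rightarrow> 'k) \<Rightarrow> 'm \<Rightarrow> 'k) set" where
  "Kcoch N R smult p = {f. lin_on sc (\<lambda>c u m. c * u m) (Wsp N R (nu N p)) f
        \<and> (\<forall>w\<in>Wsp N R (nu N p). f w \<in> Mdual smult)
        \<and> (\<forall>w. w \<notin> Wsp N R (nu N p) \<longrightarrow> f w = 0)}"

definition dK :: "nat \<Rightarrow> ('x list \<Rightarrow> 'k::field) set \<Rightarrow> ('x \<Rightarrow> 'm \<Rightarrow> 'm) \<Rightarrow> ('x \<Rightarrow> 'm \<Rightarrow> 'm) \<Rightarrow> nat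
     \<Rightarrow> (('x list \<Rightarrow> 'k) \<Rightarrow> 'm \<Rightarrow> 'k) \<Rightarrow> ('x list \<Rightarrow> 'k) \<Rightarrow> 'm \<Rightarrow> 'k" where
  "dK N R lact ract p f = bK_cochain N R (dual_lact ract) (dual_ract lact) p f"

definition eta :: "nat \<Rightarrow> ('x list \<Rightarrow> 'k::field) set \<Rightarrow> ('k \<Rightarrow> 'm \<Rightarrow> 'm) \<Rightarrow> nat
     \<Rightarrow> (('x list \<Rightarrow> 'm) \<Rightarrow> 'k) \<Rightarrow> ('x list \<Rightarrow> 'k) \<Rightarrow> 'm \<Rightarrow> 'k" where
  "eta N R smult p \<phi> = (\<lambda>w. if w \<in> Wsp N R (nu N p) then (\<lambda>m. \<phi> (mt smult m w)) else 0)"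

definition cocycles :: "(nat \<Rightarrow> 'a set) \<Rightarrow> (nat \<Rightarrow> 'a \<Rightarrow> 'a::zero) \<Rightarrow> nat \<Rightarrow> 'a set" where
  "cocycles X d p = {z\<in>X p. d p z = 0}"

definition coboundaries :: "(nat \<Rightarrow> 'a set) \<Rightarrow> (nat \<Rightarrow> 'a \<Rightarrow> 'a::zero) \<Rightarrow> nat \<Rightarrow> 'a set" where
  "coboundaries X d p = (if p = 0 then {0} else d (p - 1) ` X (p - 1))"

text \<open>h maps Z1 into Z2 and B1 into B2, and the induced map Z1/B1 \<rightarrow> Z2/B2 is bijective\<close>
definition induces_iso :: "'a set \<Rightarrow> 'a set \<Rightarrow> 'b set \<Rightarrow> 'b set \<Rightarrow> ('a \<Rightarrow> 'b::minus) \<Rightarrow> bool" where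
  "induces_iso Z1 B1 Z2 B2 h \<longleftrightarrow> h ` Z1 \<subseteq> Z2 \<and> h ` B1 \<subseteq> B2
     \<and> (\<forall>z\<in>Z1. h z \<in> B2 \<longrightarrow> z \<in> B1)
     \<and> (\<forall>z'\<in>Z2. \<exists>z\<in>Z1. h z - z' \<in> B2)"

text \<open>functoriality: g : M \<rightarrow> M' induces (g tensor 1)^* on C and (g^*)_* on Koszul cochains\<close>
definition pullC :: "nat \<Rightarrow> ('x list \<Rightarrow> 'k::field) set \<Rightarrow> ('k \<Rightarrow> 'm::ab_group_add \<Rightarrow> 'm) \<Rightarrow> nat
     \<Rightarrow> ('m \<Rightarrow> 'n) \<Rightarrow> (('x list \<Rightarrow> 'n) \<Rightarrow> 'k) \<Rightarrow> ('x list \<Rightarrow> 'm) \<Rightarrow> 'k" where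
  "pullC N R smult p g \<psi> = (\<lambda>t. if t \<in> MW N R smult (nu N p) then \<psi> (g \<circ> t) else 0)"

definition pushK :: "('m \<Rightarrow> 'n) \<Rightarrow> (('x list \<Rightarrow> 'k) \<Rightarrow> 'n \<Rightarrow> 'k) \<Rightarrow> ('x list \<Rightarrow> 'k) \<Rightarrow> 'm \<Rightarrow> 'k" where
  "pushK g f = (\<lambda>w. f w \<circ> g)"

end

theory Submission
  imports Defs
begin

text \<open>The map \<open>\<eta>\<^sub>p\<close> is the tensor-hom adjunction
  \<open>Hom(M \<otimes> W, k) \<cong> Hom(W, Hom(M, k))\<close> in each degree. It is onto because a Koszul cochain,
  linear on the subspace \<open>W\<^bsub>\<nu>(p)\<^esub>\<close>, extends linearly to all tensors and can then be
  paired with \<open>M \<otimes> W\<close> basis word by basis word. It intertwines the differentials because the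
  actions of \<open>A\<close> on \<open>M\<^sup>*\<close> are the transposes of those on \<open>M\<close>: evaluated at \<open>m\<close>, the Koszul
  cochain differential of \<open>\<eta>(\<phi>)\<close> is \<open>\<phi>\<close> applied to \<open>b\<^sub>K(m \<otimes> w)\<close> term by term, and the sign
  \<open>-(-1)\<^sup>p\<close> compensates for the two terms of \<open>b\<^sub>K\<close> appearing in opposite order in even
  degrees. An isomorphism of cochain complexes induces isomorphisms in cohomology, and \<open>\<eta>\<close>
  commutes on the nose with the maps induced by a bimodule morphism.\<close>

section \<open>Finitely supported sums\<close>

lemma sum_fun_apply: "(sum f A) x = (\<Sum>a\<in>A. f a x)"
  by (induction A rule: infinite_finite_induct) auto

lemma sum_if_reindex:
  assumes "finite S"
    and inv: "\<And>u. u \<in> S \<Longrightarrow> P u \<Longrightarrow> g (k u) = u"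
    and hit: "\<And>y. y \<in> k ` S \<Longrightarrow> g y \<in> S \<Longrightarrow> P (g y) \<and> k (g y) = y"
    and miss: "\<And>y. y \<in> k ` S \<Longrightarrow> g y \<notin> S \<Longrightarrow> H y (g y) = 0"
  shows "(\<Sum>u\<in>S. if P u then H (k u) u else 0) = (\<Sum>y\<in>k ` S. H y (g y))"
proof -
  let ?A = "{u\<in>S. P u}"
  have "(\<Sum>u\<in>S. if P u then H (k u) u else 0) = (\<Sum>u\<in>?A. H (k u) (g (k u)))"
    using assms(1) inv by (simp add: sum.inter_filter)
  also have "\<dots> = (\<Sum>y\<in>k ` ?A. H y (g y))"
    by (rule sum.reindex[symmetric, unfolded comp_def]) (metis (mono_tags, lifting) inj_onI inv mem_Collect_eq)
  also have "\<dots> = (\<Sum>y\<in>k ` S. H y (g y))"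
  proof (rule sum.mono_neutral_left)
    show "\<forall>y\<in>k ` S - k ` ?A. H y (g y) = 0"
      using hit miss by (metis (mono_tags, lifting) DiffE image_eqI mem_Collect_eq)
  qed (use assms(1) in auto)
  finally show ?thesis .
qed

lemma sum_if_infix_reindex:
  assumes "finite S" and len: "\<And>u. u \<in> S \<Longrightarrow> length u = n" and "i + k \<le> n"
    and miss: "\<And>a c. a @ v @ c \<notin> S \<Longrightarrow> H a c (a @ v @ c) = 0"
  shows "(\<Sum>u\<in>S. if take k (drop i u) = v then H (take i u) (drop (i + k) u) u else 0)
    = (\<Sum>(a, c)\<in>(\<lambda>u. (take i u, drop (i + k) u)) ` S. H a c (a @ v @ c))"
proof -
  have hit: "take k (drop i (a @ v @ c)) = v \<and> (take i (a @ v @ c), drop (i + k) (a @ v @ c)) = (a, c)"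
    if "(a, c) \<in> (\<lambda>u. (take i u, drop (i + k) u)) ` S" "a @ v @ c \<in> S" for a c
  proof -
    from that(1) obtain u where u: "u \<in> S" "a = take i u" "c = drop (i + k) u" by blast
    have "length (a @ v @ c) = n" "length u = n" using len[OF that(2)] len[OF u(1)] by auto
    with u \<open>i + k \<le> n\<close> have "length a = i" "length v = k" by auto
    then show ?thesis by simp
  qed
  have "take i u @ v @ drop (i + k) u = u" if "take k (drop i u) = v" for u
    using that by (metis add.commute append_take_drop_id drop_drop)
  with \<open>finite S\<close> show ?thesis
    using sum_if_reindex[of S "\<lambda>u. take k (drop i u) = v" "\<lambda>(a, c). a @ v @ c"
        "\<lambda>u. (take i u, drop (i + k) u)" "\<lambda>(a, c) u. H a c u"] hit miss
    by (auto simp: split_beta)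
qed

lemma fsupp_add: "fsupp (f + g) \<subseteq> fsupp f \<union> fsupp (g :: 'a \<Rightarrow> 'b::monoid_add)"
  by (auto simp: fsupp_def)

definition fsum :: "('a \<Rightarrow> 'b::zero \<Rightarrow> 'c::comm_monoid_add) \<Rightarrow> ('a \<Rightarrow> 'b) \<Rightarrow> 'c" where
  "fsum F t = (\<Sum>u\<in>fsupp t. F u (t u))"

lemma fsum_superset:
  assumes "finite S" "fsupp t \<subseteq> S" "\<And>u. F u 0 = 0"
  shows "fsum F t = (\<Sum>u\<in>S. F u (t u))"
  unfolding fsum_def by (rule sum.mono_neutral_left) (use assms in \<open>auto simp: fsupp_def\<close>)

lemma fsum_add:
  fixes F :: "'a \<Rightarrow> 'b::monoid_add \<Rightarrow> 'c::ab_group_add"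
  assumes "finite (fsupp t1)" "finite (fsupp t2)" and add: "\<And>u a b. F u (a + b) = F u a + F u b"
  shows "fsum F (t1 + t2) = fsum F t1 + fsum F t2"
proof -
  let ?S = "fsupp t1 \<union> fsupp t2"
  have zero: "F u 0 = 0" for u
    using add[of u 0 0] by simp
  have "fsum F (t1 + t2) = (\<Sum>u\<in>?S. F u ((t1 + t2) u))"
    by (rule fsum_superset) (use assms(1,2) fsupp_add[of t1 t2] zero in auto)
  also have "\<dots> = (\<Sum>u\<in>?S. F u (t1 u)) + (\<Sum>u\<in>?S. F u (t2 u))"
    by (simp add: add sum.distrib)
  also have "\<dots> = fsum F t1 + fsum F t2"
    using fsum_superset[of ?S t1 F] fsum_superset[of ?S t2 F] assms(1,2) zero by simp
  finally show ?thesis .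
qed

lemma single_add: "single v (a + b) = single v a + (single v b :: _ \<Rightarrow> 'b::monoid_add)"
  by (auto simp: single_def fun_eq_iff)

lemma single_zero[simp]: "single v 0 = 0"
  by (auto simp: single_def fun_eq_iff)

lemma lin_on_zero:
  assumes "lin_on s1 s2 S f" "(0::'a::monoid_add) \<in> S"
  shows "f 0 = (0::'b::ab_group_add)"
proof -
  have "f (0 + 0) = f 0 + f 0" using assms unfolding lin_on_def by blast
  then show ?thesis by simp
qed

lemma lin_on_sum:
  assumes f: "lin_on s1 s2 S f" and S: "(0::'a::comm_monoid_add) \<in> S" "\<forall>x\<in>S. \<forall>y\<in>S. x + y \<in> S"
  shows "(\<And>i. i \<in> I \<Longrightarrow> t i \<in> S) \<Longrightarrow> f (sum t I) = (\<Sum>i\<in>I. (f (t i) :: 'b::ab_group_add))"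
proof (induction I rule: infinite_finite_induct)
  case (insert x F)
  have "sum t F \<in> S"
    using insert.prems S by (induction F rule: infinite_finite_induct) auto
  with insert f show ?case unfolding lin_on_def by simp
qed (use lin_on_zero[OF f S(1)] in auto)

lemma lin_on_diff:
  assumes "lin_on s1 s2 S f" "y \<in> S" "(x::'a::ab_group_add) - y \<in> S"
  shows "f (x - y) = f x - (f y :: 'b::ab_group_add)"
proof -
  have "f ((x - y) + y) = f (x - y) + f y" using assms unfolding lin_on_def by blast
  then show ?thesis by (simp add: algebra_simps)
qed

section \<open>Tensors\<close>

interpretation tensor: vector_space "sc :: 'k::field \<Rightarrow> ('a \<Rightarrow> 'k) \<Rightarrow> 'a \<Rightarrow> 'k"
  by unfold_locales (auto simp: sc_def fun_eq_iff algebra_simps)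

lemma sc_eq_lambda: "(\<lambda>c u m. c * u m) = sc"
  by (auto simp: sc_def fun_eq_iff)

lemma vector_space_msc: "vector_space s \<Longrightarrow> vector_space (msc s)"
  unfolding vector_space_def msc_def by (auto simp: fun_eq_iff)

lemma Tn_length: "f \<in> Tn n \<Longrightarrow> f u \<noteq> 0 \<Longrightarrow> length u = n"
  by (auto simp: Tn_def fsupp_def)

lemma Tn_finite: "f \<in> Tn n \<Longrightarrow> finite (fsupp f)"
  by (simp add: Tn_def)

lemma Tn_subspace: "tensor.subspace (Tn n :: ('x list \<Rightarrow> 'k::field) set)"
  unfolding tensor.subspace_def
proof (intro conjI ballI allI)
  show "0 \<in> Tn n" by (simp add: Tn_def fsupp_def)
next
  fix x y :: "'x list \<Rightarrow> 'k" assume "x \<in> Tn n" "y \<in> Tn n"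
  then show "x + y \<in> Tn n"
    using fsupp_add[of x y] unfolding Tn_def by (auto intro: finite_subset)
next
  fix c :: 'k and x :: "'x list \<Rightarrow> 'k" assume "x \<in> Tn n"
  moreover have "fsupp (sc c x) \<subseteq> fsupp x" by (auto simp: fsupp_def sc_def)
  ultimately show "sc c x \<in> Tn n"
    unfolding Tn_def by (auto intro: finite_subset)
qed

lemma tprod_eq_left:
  assumes "f \<in> Tn i"
  shows "tprod f g u = (if i \<le> length u then f (take i u) * g (drop i u) else 0)"
proof -
  have "f (take k u) * g (drop k u) = (if k = i then f (take i u) * g (drop i u) else 0)"
    if "k \<in> {..length u}" for k
  proof (cases "k = i")
    case False
    with that have "f (take k u) = 0"
      using Tn_length[OF assms, of "take k u"] by fastforce
    with False show ?thesis by simp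
  qed simp
  then have "tprod f g u = (\<Sum>k\<le>length u. if k = i then f (take i u) * g (drop i u) else 0)"
    unfolding tprod_def by (rule sum.cong[OF refl])
  then show ?thesis by (simp add: sum.delta)
qed

lemma tprod_eq_right:
  assumes "g \<in> Tn j"
  shows "tprod f g u
    = (if j \<le> length u then f (take (length u - j) u) * g (drop (length u - j) u) else 0)"
proof -
  let ?k = "length u - j"
  have "f (take k u) * g (drop k u) = (if k = ?k \<and> j \<le> length u then f (take ?k u) * g (drop ?k u) else 0)"
    if "k \<in> {..length u}" for k
  proof (cases "k = ?k \<and> j \<le> length u")
    case False
    with that have "g (drop k u) = 0"
      using Tn_length[OF assms, of "drop k u"] by fastforce
    then show ?thesis by (simp add: if_not_P[OF False])
  qed auto
  then have "tprod f g u
      = (\<Sum>k\<le>length u. if k = ?k \<and> j \<le> length u then f (take ?k u) * g (drop ?k u) else 0)"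
    unfolding tprod_def by (rule sum.cong[OF refl])
  then show ?thesis by (simp add: sum.delta)
qed

lemma tprod_Tn:
  assumes f: "f \<in> Tn i" and g: "g \<in> Tn j"
  shows "tprod f g \<in> Tn (i + j)"
proof -
  have supp: "i \<le> length u" "take i u \<in> fsupp f" "drop i u \<in> fsupp g"
    if "u \<in> fsupp (tprod f g)" for u
    using that by (auto simp: fsupp_def tprod_eq_left[OF f] split: if_splits)
  have "fsupp (tprod f g) \<subseteq> (\<lambda>(a, b). a @ b) ` (fsupp f \<times> fsupp g)"
  proof
    fix u assume "u \<in> fsupp (tprod f g)"
    with supp show "u \<in> (\<lambda>(a, b). a @ b) ` (fsupp f \<times> fsupp g)"
      by (intro image_eqI[of _ _ "(take i u, drop i u)"]) auto
  qed
  then have "finite (fsupp (tprod f g))"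
    by (rule finite_subset) (use f g in \<open>simp add: Tn_finite\<close>)
  moreover have "length u = i + j" if "u \<in> fsupp (tprod f g)" for u
    using supp[OF that] Tn_length[OF g, of "drop i u"] by (simp add: fsupp_def)
  ultimately show ?thesis by (simp add: Tn_def)
qed

lemma slice_Tn:
  assumes "w \<in> Tn (length a + n + length c)"
  shows "slice a c w \<in> Tn n"
proof -
  have supp: "fsupp (slice a c w) = (\<lambda>u. a @ u @ c) -` fsupp w"
    by (auto simp: fsupp_def slice_def)
  have "finite ((\<lambda>u. a @ u @ c) -` fsupp w)"
    by (rule finite_vimageI) (use assms in \<open>simp_all add: Tn_finite inj_def\<close>)
  with assms show ?thesis
    by (auto simp: Tn_def supp)
qed

lemma slice_linear: "module_hom sc sc (slice a c :: ('x list \<Rightarrow> 'k::field) \<Rightarrow> _)"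
  by (simp add: module_hom_iff slice_def sc_def fun_eq_iff tensor.module_axioms)

lemma slice_slice: "slice a [] (slice [] c w) = slice a c w"
  by (simp add: slice_def)

lemma slice_left_tprod:
  assumes f: "f \<in> Tn (length a + i)"
  shows "slice a [] (tprod f h) = tprod (slice a [] f) h"
proof
  have f': "slice a [] f \<in> Tn i"
    by (rule slice_Tn) (use f in simp)
  fix v
  have "slice a [] (tprod f h) v = tprod f h (a @ v)"
    by (simp add: slice_def)
  also have "\<dots> = tprod (slice a [] f) h v"
    unfolding tprod_eq_left[OF f] tprod_eq_left[OF f'] by (simp add: slice_def)
  finally show "slice a [] (tprod f h) v = tprod (slice a [] f) h v" .
qed

lemma slice_right_tprod:
  assumes h: "h \<in> Tn (j + length c)"
  shows "slice [] c (tprod f h) = tprod f (slice [] c h)"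
proof
  have h': "slice [] c h \<in> Tn j"
    by (rule slice_Tn) (use h in simp)
  fix v
  have "slice [] c (tprod f h) v = tprod f h (v @ c)"
    by (simp add: slice_def)
  also have "\<dots> = tprod f (slice [] c h) v"
    unfolding tprod_eq_right[OF h] tprod_eq_right[OF h'] by (simp add: slice_def)
  finally show "slice [] c (tprod f h) v = tprod f (slice [] c h) v" .
qed

lemma sum_single_expansion:
  assumes "finite (fsupp w)"
  shows "(\<Sum>u\<in>fsupp w. sc (w u) (single u (1::'k::field))) = w"
proof
  fix v
  have "(\<Sum>u\<in>fsupp w. sc (w u) (single u (1::'k))) v = (\<Sum>u\<in>fsupp w. if v = u then w v else 0)"
    by (auto simp: sum_fun_apply sc_def single_def intro!: sum.cong)
  also have "\<dots> = w v" using assms by (simp add: fsupp_def)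
  finally show "(\<Sum>u\<in>fsupp w. sc (w u) (single u (1::'k))) v = w v" .
qed

lemma lin_on_extend:
  fixes f :: "('a \<Rightarrow> 'k::field) \<Rightarrow> 'b \<Rightarrow> 'k"
  assumes S: "tensor.subspace S" and f: "lin_on sc sc S f"
  obtains g where "Vector_Spaces.linear sc sc g" "\<And>x. x \<in> S \<Longrightarrow> g x = f x"
    "range g \<subseteq> tensor.span (f ` S)"
proof -
  interpret pair: vector_space_pair "sc :: 'k \<Rightarrow> ('a \<Rightarrow> 'k) \<Rightarrow> _" "sc :: 'k \<Rightarrow> ('b \<Rightarrow> 'k) \<Rightarrow> _"
    by unfold_locales
  obtain B where B: "B \<subseteq> S" "tensor.independent B" "S \<subseteq> tensor.span B"
    by (rule tensor.basis_exists)
  obtain g where g: "Vector_Spaces.linear sc sc g" "\<forall>x\<in>B. g x = f x" "range g = tensor.span (f ` B)"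
    using pair.linear_independent_extend_subspace[OF B(2)] by blast
  have "x \<in> S \<and> g x = f x" if "x \<in> tensor.span B" for x
    using that
  proof (induction rule: tensor.span_induct_alt)
    case base
    show ?case
      using lin_on_zero[OF f] tensor.subspace_0[OF S] pair.linear_0[OF g(1)] by (simp flip: zero_fun_def)
  next
    case (step c x y)
    have x: "x \<in> S" using step.hyps B(1) by blast
    then have cx: "sc c x \<in> S" by (rule tensor.subspace_scale[OF S])
    have "g (sc c x + y) = sc c (g x) + g y"
      using pair.linear_add[OF g(1)] pair.linear_scale[OF g(1)] by metis
    also have "\<dots> = f (sc c x + y)"
      using f cx x step.IH g(2) step.hyps unfolding lin_on_def by metis
    finally show ?case
      using tensor.subspace_add[OF S cx] step.IH by blast
  qed
  moreover have "tensor.span (f ` B) \<subseteq> tensor.span (f ` S)"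
    using B(1) by (intro tensor.span_mono image_mono)
  ultimately show ?thesis
    using that[OF g(1)] g(3) B(3) by blast
qed

section \<open>The spaces \<open>W\<^sub>n\<close>\<close>

definition Rgens :: "nat \<Rightarrow> ('x list \<Rightarrow> 'k::field) set \<Rightarrow> nat \<Rightarrow> nat \<Rightarrow> ('x list \<Rightarrow> 'k) set" where
  "Rgens N R n i = {tprod (tprod f r) g | f r g. f \<in> Tn i \<and> r \<in> R \<and> g \<in> Tn (n - N - i)}"

lemma Wsp_eq:
  "Wsp N R n = (if n < N then Tn n else (\<Inter>i\<in>{0..n - N}. tensor.span (Rgens N R n i)))"
  by (simp add: Wsp_def Rgens_def)

lemma Wsp_subspace: "tensor.subspace (Wsp N R n)"
  by (auto simp: Wsp_eq Tn_subspace intro!: tensor.subspace_Int)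

lemma Wsp_Tn:
  assumes "tsubspace N R"
  shows "Wsp N R n \<subseteq> Tn n"
proof (cases "n < N")
  case False
  have "Rgens N R n 0 \<subseteq> Tn n"
  proof
    fix x assume "x \<in> Rgens N R n 0"
    then obtain f r g where x: "x = tprod (tprod f r) g" "f \<in> Tn 0" "r \<in> R" "g \<in> Tn (n - N)"
      by (auto simp: Rgens_def)
    have "r \<in> Tn N" using assms x(3) by (auto simp: tsubspace_def)
    then have "x \<in> Tn (0 + N + (n - N))" unfolding x by (intro tprod_Tn x)
    then show "x \<in> Tn n" using False by simp
  qed
  then have "tensor.span (Rgens N R n 0) \<subseteq> Tn n" by (intro tensor.span_minimal Tn_subspace)
  then show ?thesis using False by (auto simp: Wsp_eq)
qed (simp add: Wsp_eq)

lemma Wsp_finite: "tsubspace N R \<Longrightarrow> w \<in> Wsp N R n \<Longrightarrow> finite (fsupp w)"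
  using Wsp_Tn Tn_finite by blast

lemma Wsp_length: "tsubspace N R \<Longrightarrow> w \<in> Wsp N R n \<Longrightarrow> u \<in> fsupp w \<Longrightarrow> length u = n"
  using Wsp_Tn Tn_length by (fastforce simp: fsupp_def)

lemma span_slice_Rgens:
  assumes "slice a c ` Rgens N R n i \<subseteq> Rgens N R n' i'" "w \<in> tensor.span (Rgens N R n i)"
  shows "slice a c w \<in> tensor.span (Rgens N R n' i')"
proof -
  have "slice a c w \<in> tensor.span (slice a c ` Rgens N R n i)"
    using assms(2) module_hom.span_image[OF slice_linear] by blast
  then show ?thesis
    using tensor.span_mono[OF assms(1)] by blast
qed

text \<open>Removing a prefix (suffix) from a generator \<open>f \<otimes> r \<otimes> g\<close> of \<open>W\<close> only shortens \<open>f\<close>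
  (\<open>g\<close>), so slicing maps generators to generators.\<close>

lemma Wsp_slice_left:
  assumes R: "tsubspace N R" and w: "w \<in> Wsp N R (length a + n)"
  shows "slice a [] w \<in> Wsp N R n"
proof (cases "n < N")
  case True
  have "w \<in> Tn (length a + n + length [])" using Wsp_Tn[OF R] w by auto
  then show ?thesis using True by (simp add: Wsp_eq slice_Tn)
next
  case False
  have gens: "slice a [] ` Rgens N R (length a + n) (length a + i) \<subseteq> Rgens N R n i" for i
  proof
    fix y assume "y \<in> slice a [] ` Rgens N R (length a + n) (length a + i)"
    then obtain f r g where y: "y = slice a [] (tprod (tprod f r) g)" and
      f: "f \<in> Tn (length a + i)" and r: "r \<in> R" and g: "g \<in> Tn (length a + n - N - (length a + i))"
      unfolding Rgens_def by blast
    have fr: "tprod f r \<in> Tn (length a + (i + N))"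
      using tprod_Tn[OF f] r R by (auto simp: tsubspace_def add.assoc)
    have "y = tprod (tprod (slice a [] f) r) g"
      unfolding y slice_left_tprod[OF fr] slice_left_tprod[OF f] ..
    moreover have "slice a [] f \<in> Tn i" by (rule slice_Tn) (use f in simp)
    ultimately show "y \<in> Rgens N R n i" using r g unfolding Rgens_def by auto
  qed
  show ?thesis
  proof (unfold Wsp_eq if_not_P[OF False], rule INT_I)
    fix i assume "i \<in> {0..n - N}"
    then have "w \<in> tensor.span (Rgens N R (length a + n) (length a + i))"
      using w False by (auto simp: Wsp_eq)
    then show "slice a [] w \<in> tensor.span (Rgens N R n i)"
      by (rule span_slice_Rgens[OF gens])
  qed
qed

lemma Wsp_slice_right:
  assumes R: "tsubspace N R" and w: "w \<in> Wsp N R (n + length c)"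
  shows "slice [] c w \<in> Wsp N R n"
proof (cases "n < N")
  case True
  have "w \<in> Tn (length [] + n + length c)" using Wsp_Tn[OF R] w by auto
  then show ?thesis using True by (simp add: Wsp_eq slice_Tn)
next
  case False
  have gens: "slice [] c ` Rgens N R (n + length c) i \<subseteq> Rgens N R n i" if "i \<le> n - N" for i
  proof
    fix y assume "y \<in> slice [] c ` Rgens N R (n + length c) i"
    then obtain f r g where y: "y = slice [] c (tprod (tprod f r) g)" and
      f: "f \<in> Tn i" and r: "r \<in> R" and g: "g \<in> Tn (n + length c - N - i)"
      unfolding Rgens_def by blast
    have g': "g \<in> Tn (n - N - i + length c)" using g that False by (simp add: add.commute)
    then have "y = tprod (tprod f r) (slice [] c g)"
      unfolding y by (rule slice_right_tprod)
    moreover have "slice [] c g \<in> Tn (n - N - i)" by (rule slice_Tn) (use g' in simp)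
    ultimately show "y \<in> Rgens N R n i" using f r unfolding Rgens_def by auto
  qed
  show ?thesis
  proof (unfold Wsp_eq if_not_P[OF False], rule INT_I)
    fix i assume "i \<in> {0..n - N}"
    then have "w \<in> tensor.span (Rgens N R (n + length c) i)" "i \<le> n - N"
      using w False by (auto simp: Wsp_eq)
    then show "slice [] c w \<in> tensor.span (Rgens N R n i)"
      using span_slice_Rgens[OF gens] by blast
  qed
qed

lemma Wsp_slice:
  assumes "tsubspace N R" "w \<in> Wsp N R (length a + n + length c)"
  shows "slice a c w \<in> Wsp N R n"
  using assms Wsp_slice_left Wsp_slice_right slice_slice
  by (metis add.assoc)

lemma lword_dual_lact: "lword (dual_lact ract) a u = (\<lambda>m. u (rword ract a m))"
  by (induction a) (simp_all add: lword_def rword_def dual_lact_def)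

lemma rword_dual_ract: "rword (dual_ract lact) c u = (\<lambda>m. u (lword lact c m))"
  by (induction c arbitrary: u) (simp_all add: lword_def rword_def dual_ract_def)

lemma Mdual_subspace: "tensor.subspace (Mdual (s :: 'k::field \<Rightarrow> 'm::ab_group_add \<Rightarrow> 'm))"
  unfolding tensor.subspace_def Mdual_def lin_on_def
  by (auto simp: sc_def algebra_simps)

lemma Mdual_zero: "u \<in> Mdual (s :: 'k::field \<Rightarrow> 'm::ab_group_add \<Rightarrow> 'm) \<Longrightarrow> u 0 = 0"
  using lin_on_zero[of s "(*)" UNIV u] by (simp add: Mdual_def)

section \<open>Isomorphisms of cochain complexes\<close>

lemma zero_in_coboundaries:
  assumes "0 \<in> X (p - 1)" "d (p - 1) 0 = 0"
  shows "0 \<in> coboundaries X d p"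
  using assms by (force simp: coboundaries_def)

locale cochain_iso =
  fixes X1 :: "nat \<Rightarrow> 'a::zero set" and d1 :: "nat \<Rightarrow> 'a \<Rightarrow> 'a"
    and X2 :: "nat \<Rightarrow> 'b::ab_group_add set" and d2 :: "nat \<Rightarrow> 'b \<Rightarrow> 'b"
    and h :: "nat \<Rightarrow> 'a \<Rightarrow> 'b"
  assumes bij: "bij_betw (h p) (X1 p) (X2 p)"
    and commutes: "x \<in> X1 p \<Longrightarrow> h (Suc p) (d1 p x) = d2 p (h p x)"
    and d1_closed: "x \<in> X1 p \<Longrightarrow> d1 p x \<in> X1 (Suc p)"
    and h_zero: "h p 0 = 0" and zero_mem: "0 \<in> X1 p" and d2_zero: "d2 p 0 = 0"
begin

lemma h_inj: "inj_on (h p) (X1 p)" and h_image: "h p ` X1 p = X2 p"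
  using bij by (auto simp: bij_betw_def)

lemma image_cocycles: "h p ` cocycles X1 d1 p \<subseteq> cocycles X2 d2 p"
proof
  fix y assume "y \<in> h p ` cocycles X1 d1 p"
  then obtain z where z: "z \<in> X1 p" "d1 p z = 0" "y = h p z" by (auto simp: cocycles_def)
  then have "d2 p y = 0" using commutes[OF z(1)] h_zero by simp
  then show "y \<in> cocycles X2 d2 p" using z h_image by (auto simp: cocycles_def)
qed

lemma image_coboundaries: "h p ` coboundaries X1 d1 p \<subseteq> coboundaries X2 d2 p"
proof (cases p)
  case (Suc q)
  have "h p (d1 q x) \<in> d2 q ` X2 q" if "x \<in> X1 q" for x
    using that commutes h_image Suc by force
  then show ?thesis using Suc by (auto simp: coboundaries_def)
qed (simp add: coboundaries_def h_zero)

lemma coboundary_reflect: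
  assumes z: "z \<in> cocycles X1 d1 p" and hz: "h p z \<in> coboundaries X2 d2 p"
  shows "z \<in> coboundaries X1 d1 p"
proof (cases p)
  case 0
  then have "h p z = h p 0" using hz h_zero by (simp add: coboundaries_def)
  then have "z = 0" using inj_onD[OF h_inj] z zero_mem by (auto simp: cocycles_def)
  then show ?thesis using 0 by (simp add: coboundaries_def)
next
  case (Suc q)
  then obtain y' where "y' \<in> X2 q" "h p z = d2 q y'"
    using hz by (auto simp: coboundaries_def)
  then obtain y where y: "y \<in> X1 q" "h p z = d2 q (h q y)"
    using h_image by (metis imageE)
  then have "h p z = h p (d1 q y)" using commutes Suc by simp
  then have "z = d1 q y" using inj_onD[OF h_inj] z d1_closed[OF y(1)] Suc by (auto simp: cocycles_def)
  then show ?thesis using y Suc by (simp add: coboundaries_def)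
qed

lemma cocycles_surj:
  assumes "z' \<in> cocycles X2 d2 p"
  shows "\<exists>z\<in>cocycles X1 d1 p. h p z = z'"
proof -
  obtain z where z: "z \<in> X1 p" "z' = h p z" using assms h_image by (auto simp: cocycles_def)
  then have "h (Suc p) (d1 p z) = h (Suc p) 0" using assms commutes h_zero by (simp add: cocycles_def)
  then have "d1 p z = 0" using inj_onD[OF h_inj] d1_closed[OF z(1)] zero_mem by blast
  then show ?thesis using z by (auto simp: cocycles_def)
qed

lemma induces_iso:
  "induces_iso (cocycles X1 d1 p) (coboundaries X1 d1 p) (cocycles X2 d2 p) (coboundaries X2 d2 p) (h p)"
  unfolding induces_iso_def
proof (intro conjI ballI impI image_cocycles image_coboundaries)
  show "z \<in> coboundaries X1 d1 p" if "z \<in> cocycles X1 d1 p" "h p z \<in> coboundaries X2 d2 p" for z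
    using coboundary_reflect that .
next
  fix z' assume "z' \<in> cocycles X2 d2 p"
  then obtain z where "z \<in> cocycles X1 d1 p" "h p z = z'" using cocycles_surj by blast
  moreover have "0 \<in> coboundaries X2 d2 p"
    by (rule zero_in_coboundaries) (use h_image zero_mem h_zero d2_zero in force)+
  ultimately show "\<exists>z\<in>cocycles X1 d1 p. h p z - z' \<in> coboundaries X2 d2 p" by force
qed

end

section \<open>The complex \<open>C\<close> and the Koszul cochains of \<open>M\<^sup>*\<close>\<close>

locale koszul_dual = M: vector_space smult
  for smult :: "'k::field \<Rightarrow> 'm::ab_group_add \<Rightarrow> 'm" +
  fixes N :: nat and R :: "('x list \<Rightarrow> 'k) set" and lact ract :: "'x \<Rightarrow> 'm \<Rightarrow> 'm"
  assumes N_pos: "0 < N" and R: "tsubspace N R"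
    and lact_linear: "lin_on smult smult UNIV (lact x)" and ract_linear: "lin_on smult smult UNIV (ract x)"
begin

sublocale MT: vector_space "msc smult :: 'k \<Rightarrow> ('x list \<Rightarrow> 'm) \<Rightarrow> _"
  by (rule vector_space_msc[OF M.vector_space_axioms])

lemma lact_add: "lact x (a + b) = lact x a + lact x b"
  and ract_add: "ract x (a + b) = ract x a + ract x b"
  and lact_scale: "lact x (smult c a) = smult c (lact x a)"
  and ract_scale: "ract x (smult c a) = smult c (ract x a)"
  using lact_linear ract_linear unfolding lin_on_def by blast+

lemma lact_zero [simp]: "lact x 0 = 0"
  using lact_add[of x 0 0] by simp

lemma ract_zero [simp]: "ract x 0 = 0"
  using ract_add[of x 0 0] by simp

lemma lword_zero [simp]: "lword lact a 0 = 0"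
  by (induction a) (simp_all add: lword_def)

lemma rword_zero [simp]: "rword ract a 0 = 0"
  by (induction a) (simp_all add: rword_def)

lemma lword_add: "lword lact a (m1 + m2) = lword lact a m1 + lword lact a m2"
  by (induction a) (simp_all add: lword_def lact_add)

lemma lword_scale: "lword lact a (smult c m) = smult c (lword lact a m)"
  by (induction a) (simp_all add: lword_def lact_scale)

lemma rword_add: "rword ract a (m1 + m2) = rword ract a m1 + rword ract a m2"
  by (induction a arbitrary: m1 m2) (simp_all add: rword_def ract_add)

lemma rword_scale: "rword ract a (smult c m) = smult c (rword ract a m)"
  by (induction a arbitrary: m) (simp_all add: rword_def ract_scale)

lemma mt_add_tensor: "mt smult m (w1 + w2) = mt smult m w1 + mt smult m w2"
  by (simp add: mt_def fun_eq_iff M.scale_left_distrib)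

lemma mt_scale_tensor: "mt smult m (sc c w) = msc smult c (mt smult m w)"
  by (simp add: mt_def msc_def sc_def fun_eq_iff)

lemma mt_add_vector: "mt smult (m1 + m2) w = mt smult m1 w + mt smult m2 w"
  by (simp add: mt_def fun_eq_iff M.scale_right_distrib)

lemma mt_scale_vector: "mt smult (smult c m) w = msc smult c (mt smult m w)"
  by (simp add: mt_def msc_def fun_eq_iff mult.commute)

lemma fsupp_mt: "fsupp (mt smult m w) \<subseteq> fsupp w"
  by (auto simp: fsupp_def mt_def)

lemma fsupp_msc: "fsupp (msc smult c t) \<subseteq> fsupp t"
  by (auto simp: fsupp_def msc_def)

lemma mt_in_MW: "w \<in> Wsp N R n \<Longrightarrow> mt smult m w \<in> MW N R smult n"
  unfolding MW_def by (rule MT.span_base) blast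

lemma MW_subspace: "MT.subspace (MW N R smult n)"
  unfolding MW_def by simp

lemmas MW_zero = MT.subspace_0[OF MW_subspace]
  and MW_add = MT.subspace_add[OF MW_subspace]
  and MW_diff = MT.subspace_diff[OF MW_subspace]
  and MW_scale = MT.subspace_scale[OF MW_subspace]
  and MW_sum = MT.subspace_sum[OF MW_subspace]

lemma MW_induct [consumes 1, case_names zero step]:
  assumes "t \<in> MW N R smult n" "P 0"
    "\<And>c m w y. w \<in> Wsp N R n \<Longrightarrow> y \<in> MW N R smult n \<Longrightarrow> P y \<Longrightarrow> P (msc smult c (mt smult m w) + y)"
  shows "P t"
proof -
  have "t \<in> MW N R smult n \<and> P t"
    using assms(1) unfolding MW_def
  proof (induction rule: MT.span_induct_alt)
    case base
    show ?case using MW_zero assms(2) unfolding MW_def by blast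
  next
    case (step c x y)
    then obtain m w where x: "x = mt smult m w" and w: "w \<in> Wsp N R n" by blast
    have y: "y \<in> MW N R smult n" and Py: "P y" using step.IH unfolding MW_def by auto
    have "msc smult c x + y \<in> MW N R smult n" unfolding x by (intro MW_add MW_scale mt_in_MW w y)
    with assms(3)[OF w y Py] show ?case unfolding MW_def x by blast
  qed
  then show ?thesis ..
qed

lemma MW_finite: "t \<in> MW N R smult n \<Longrightarrow> finite (fsupp t)"
proof (induction rule: MW_induct)
  case (step c m w y)
  have "finite (fsupp (msc smult c (mt smult m w)))"
    using Wsp_finite[OF R step.hyps(1)] fsupp_msc fsupp_mt by (metis finite_subset)
  with step.IH show ?case
    using fsupp_add finite_subset by (metis finite_UnI)
qed (simp add: fsupp_def)

lemma msc_single: "msc smult c (single v m) = single v (smult c m)"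
  by (auto simp: msc_def single_def fun_eq_iff)

lemma bKc_basis_zero: "bKc_basis N lact ract q w 0 = 0"
  by (simp add: bKc_basis_def)

lemma bKc_basis_add:
  "bKc_basis N lact ract q w (a + b) = bKc_basis N lact ract q w a + bKc_basis N lact ract q w b"
  by (simp add: bKc_basis_def single_add lact_add ract_add lword_add rword_add sum.distrib)

lemma bKc_basis_scale:
  "bKc_basis N lact ract q w (smult c a) = msc smult c (bKc_basis N lact ract q w a)"
  by (simp add: bKc_basis_def msc_single lact_scale ract_scale lword_scale rword_scale
      MT.scale_right_diff_distrib MT.scale_sum_right)

lemma bK_chain_eq_fsum: "bK_chain N lact ract q = fsum (bKc_basis N lact ract q)"
  by (simp add: fun_eq_iff bK_chain_def fsum_def)

lemma bK_chain_add:
  "finite (fsupp t1) \<Longrightarrow> finite (fsupp t2) \<Longrightarrow>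
    bK_chain N lact ract q (t1 + t2) = bK_chain N lact ract q t1 + bK_chain N lact ract q t2"
  unfolding bK_chain_eq_fsum by (rule fsum_add) (simp_all add: bKc_basis_add)

lemma bK_chain_scale:
  assumes "finite (fsupp t)"
  shows "bK_chain N lact ract q (msc smult c t) = msc smult c (bK_chain N lact ract q t)"
proof -
  have "bK_chain N lact ract q (msc smult c t) = (\<Sum>u\<in>fsupp t. bKc_basis N lact ract q u (msc smult c t u))"
    unfolding bK_chain_eq_fsum by (rule fsum_superset[OF assms fsupp_msc]) (rule bKc_basis_zero)
  also have "\<dots> = msc smult c (bK_chain N lact ract q t)"
    by (simp add: msc_def[of smult c t] bKc_basis_scale MT.scale_sum_right bK_chain_def)
  finally show ?thesis .
qed

lemma bK_chain_mt:
  assumes "finite (fsupp w)"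
  shows "bK_chain N lact ract q (mt smult m w) = (\<Sum>u\<in>fsupp w. bKc_basis N lact ract q u (smult (w u) m))"
proof -
  have "fsum (bKc_basis N lact ract q) (mt smult m w) = (\<Sum>u\<in>fsupp w. bKc_basis N lact ract q u (mt smult m w u))"
    by (rule fsum_superset[OF assms fsupp_mt]) (rule bKc_basis_zero)
  then show ?thesis by (simp add: bK_chain_eq_fsum mt_def)
qed

lemma nu_Suc_even: "even p \<Longrightarrow> nu N (Suc p) = Suc (nu N p)"
  by (simp add: nu_def)

lemma nu_Suc_odd: "odd p \<Longrightarrow> nu N (Suc p) = nu N p + N - 1"
  using N_pos by (auto simp: nu_def elim!: oddE)

lemma nu_odd_pos: "odd p \<Longrightarrow> nu N p \<ge> 1"
  by (simp add: nu_def)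

lemma bK_chain_mt_even:
  assumes p: "even p" and w: "w \<in> Wsp N R (nu N (Suc p))"
  shows "bK_chain N lact ract (Suc p) (mt smult m w)
    = (\<Sum>x\<in>hd ` fsupp w. mt smult (ract x m) (slice [x] [] w))
      - (\<Sum>x\<in>last ` fsupp w. mt smult (lact x m) (slice [] [x] w))"
proof
  fix v
  let ?S = "fsupp w"
  have fin: "finite ?S" by (rule Wsp_finite[OF R w])
  have ne: "u \<noteq> []" if "u \<in> ?S" for u
    using Wsp_length[OF R w that] nu_Suc_even[OF p] by auto
  have "bK_chain N lact ract (Suc p) (mt smult m w) v
      = (\<Sum>u\<in>?S. if tl u = v then smult (w u) (ract (hd u) m) else 0)
        - (\<Sum>u\<in>?S. if butlast u = v then smult (w u) (lact (last u) m) else 0)"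
    using p by (simp add: bK_chain_mt[OF fin] bKc_basis_def lact_scale ract_scale sum_fun_apply
        sum_subtractf single_def eq_commute[of v])
  also have "(\<Sum>u\<in>?S. if tl u = v then smult (w u) (ract (hd u) m) else 0)
      = (\<Sum>x\<in>hd ` ?S. smult (w (x # v)) (ract x m))"
    by (rule sum_if_reindex[of ?S "\<lambda>u. tl u = v" "\<lambda>x. x # v" hd "\<lambda>x u. smult (w u) (ract x m)"])
      (use fin ne in \<open>auto simp: fsupp_def\<close>)
  also have "(\<Sum>u\<in>?S. if butlast u = v then smult (w u) (lact (last u) m) else 0)
      = (\<Sum>x\<in>last ` ?S. smult (w (v @ [x])) (lact x m))"
    by (rule sum_if_reindex[of ?S "\<lambda>u. butlast u = v" "\<lambda>x. v @ [x]" last "\<lambda>x u. smult (w u) (lact x m)"])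
      (use fin ne in \<open>auto simp: fsupp_def\<close>)
  finally show "bK_chain N lact ract (Suc p) (mt smult m w) v
    = ((\<Sum>x\<in>hd ` fsupp w. mt smult (ract x m) (slice [x] [] w))
      - (\<Sum>x\<in>last ` fsupp w. mt smult (lact x m) (slice [] [x] w))) v"
    by (simp add: sum_fun_apply mt_def slice_def)
qed

lemma Wsp_slice_odd:
  assumes p: "odd p" and w: "w \<in> Wsp N R (nu N (Suc p))" and "i < N" "u \<in> fsupp w"
  shows "slice (take i u) (drop (i + nu N p) u) w \<in> Wsp N R (nu N p)"
proof (rule Wsp_slice[OF R])
  have "length (take i u) + nu N p + length (drop (i + nu N p) u) = nu N (Suc p)"
    using Wsp_length[OF R w \<open>u \<in> fsupp w\<close>] nu_Suc_odd[OF p] nu_odd_pos[OF p] \<open>i < N\<close> by auto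
  with w show "w \<in> Wsp N R (length (take i u) + nu N p + length (drop (i + nu N p) u))"
    by simp
qed

lemma bK_chain_mt_odd:
  assumes p: "odd p" and w: "w \<in> Wsp N R (nu N (Suc p))"
  shows "bK_chain N lact ract (Suc p) (mt smult m w)
    = (\<Sum>i<N. \<Sum>(a, c)\<in>(\<lambda>u. (take i u, drop (i + nu N p) u)) ` fsupp w.
          mt smult (lword lact c (rword ract a m)) (slice a c w))"
proof
  fix v
  let ?S = "fsupp w" and ?k = "nu N p"
  let ?H = "\<lambda>a c u. smult (w u) (lword lact c (rword ract a m))"
  have fin: "finite ?S" by (rule Wsp_finite[OF R w])
  have len: "length u = nu N (Suc p)" if "u \<in> ?S" for u
    by (rule Wsp_length[OF R w that])
  have "bK_chain N lact ract (Suc p) (mt smult m w)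
      = (\<Sum>u\<in>?S. \<Sum>i<N. single (take ?k (drop i u)) (?H (take i u) (drop (i + ?k) u) u))"
    unfolding bK_chain_mt[OF fin]
  proof (rule sum.cong[OF refl])
    fix u assume "u \<in> ?S"
    then have "Suc (length u - N) = ?k" "\<And>i. Suc (i + length u - N) = i + ?k"
      using len nu_Suc_odd[OF p] nu_odd_pos[OF p] N_pos by auto
    then show "bKc_basis N lact ract (Suc p) u (smult (w u) m)
        = (\<Sum>i<N. single (take ?k (drop i u)) (?H (take i u) (drop (i + ?k) u) u))"
      using p by (simp add: bKc_basis_def lword_scale rword_scale)
  qed
  then have "bK_chain N lact ract (Suc p) (mt smult m w) v
      = (\<Sum>i<N. \<Sum>u\<in>?S. if take ?k (drop i u) = v then ?H (take i u) (drop (i + ?k) u) u else 0)"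
    by (simp add: sum_fun_apply single_def eq_commute[of v] sum.swap[of _ ?S])
  also have "\<dots> = (\<Sum>i<N. \<Sum>(a, c)\<in>(\<lambda>u. (take i u, drop (i + ?k) u)) ` ?S. ?H a c (a @ v @ c))"
  proof (rule sum.cong[OF refl])
    fix i assume "i \<in> {..<N}"
    then have ik: "i + ?k \<le> nu N (Suc p)"
      using nu_Suc_odd[OF p] by auto
    show "(\<Sum>u\<in>?S. if take ?k (drop i u) = v then ?H (take i u) (drop (i + ?k) u) u else 0)
        = (\<Sum>(a, c)\<in>(\<lambda>u. (take i u, drop (i + ?k) u)) ` ?S. ?H a c (a @ v @ c))"
      using sum_if_infix_reindex[OF fin len ik, where H = ?H] by (simp add: fsupp_def)
  qed
  finally show "bK_chain N lact ract (Suc p) (mt smult m w) v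
    = (\<Sum>i<N. \<Sum>(a, c)\<in>(\<lambda>u. (take i u, drop (i + nu N p) u)) ` fsupp w.
          mt smult (lword lact c (rword ract a m)) (slice a c w)) v"
    by (simp add: sum_fun_apply mt_def slice_def split_beta)
qed

lemma bK_chain_mt_MW:
  assumes w: "w \<in> Wsp N R (nu N (Suc p))"
  shows "bK_chain N lact ract (Suc p) (mt smult m w) \<in> MW N R smult (nu N p)"
proof (cases "even p")
  case True
  have w': "w \<in> Wsp N R (length [x] + nu N p)" "w \<in> Wsp N R (nu N p + length [x])" for x
    using w nu_Suc_even[OF True] by simp_all
  show ?thesis unfolding bK_chain_mt_even[OF True w]
    by (intro MW_diff MW_sum mt_in_MW Wsp_slice_left[OF R w'(1)] Wsp_slice_right[OF R w'(2)])
next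
  case False
  show ?thesis unfolding bK_chain_mt_odd[OF False w]
    by (intro MW_sum) (auto intro!: mt_in_MW Wsp_slice_odd[OF False w])
qed

lemma bK_chain_MW:
  "t \<in> MW N R smult (nu N (Suc p)) \<Longrightarrow> bK_chain N lact ract (Suc p) t \<in> MW N R smult (nu N p)"
proof (induction rule: MW_induct)
  case zero
  have "bK_chain N lact ract (Suc p) 0 = 0"
    by (simp add: bK_chain_def fsupp_def)
  then show ?case
    using MW_zero by (simp only:)
next
  case (step c m w y)
  let ?x = "mt smult m w"
  have fx: "finite (fsupp ?x)" and fy: "finite (fsupp y)"
    using MW_finite mt_in_MW step.hyps(1,2) by blast+
  have fcx: "finite (fsupp (msc smult c ?x))"
    using fx fsupp_msc finite_subset by blast
  have "bK_chain N lact ract (Suc p) (msc smult c ?x + y)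
      = msc smult c (bK_chain N lact ract (Suc p) ?x) + bK_chain N lact ract (Suc p) y"
    by (simp only: bK_chain_add[OF fcx fy] bK_chain_scale[OF fx])
  then show ?case
    by (simp only:) (intro MW_add MW_scale bK_chain_mt_MW[OF step.hyps(1)] step.IH)
qed

lemma Cdual_lin_on: "\<phi> \<in> Cdual N R smult p \<Longrightarrow> lin_on (msc smult) (*) (MW N R smult (nu N p)) \<phi>"
  and Cdual_outside: "\<phi> \<in> Cdual N R smult p \<Longrightarrow> t \<notin> MW N R smult (nu N p) \<Longrightarrow> \<phi> t = 0"
  by (auto simp: Cdual_def)

lemma Cdual_add:
  "\<phi> \<in> Cdual N R smult p \<Longrightarrow> t1 \<in> MW N R smult (nu N p) \<Longrightarrow> t2 \<in> MW N R smult (nu N p)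
    \<Longrightarrow> \<phi> (t1 + t2) = \<phi> t1 + \<phi> t2"
  using Cdual_lin_on unfolding lin_on_def by blast

lemma Cdual_scale:
  "\<phi> \<in> Cdual N R smult p \<Longrightarrow> t \<in> MW N R smult (nu N p) \<Longrightarrow> \<phi> (msc smult c t) = c * \<phi> t"
  using Cdual_lin_on unfolding lin_on_def by blast

lemma Cdual_zero: "\<phi> \<in> Cdual N R smult p \<Longrightarrow> \<phi> 0 = 0"
  using lin_on_zero[OF Cdual_lin_on MW_zero] .

lemma Cdual_sum:
  "\<phi> \<in> Cdual N R smult p \<Longrightarrow> (\<And>i. i \<in> I \<Longrightarrow> t i \<in> MW N R smult (nu N p))
    \<Longrightarrow> \<phi> (sum t I) = (\<Sum>i\<in>I. \<phi> (t i))"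
  by (rule lin_on_sum[OF Cdual_lin_on MW_zero]) (auto intro: MW_add)

lemma Cdual_diff:
  "\<phi> \<in> Cdual N R smult p \<Longrightarrow> t1 \<in> MW N R smult (nu N p) \<Longrightarrow> t2 \<in> MW N R smult (nu N p)
    \<Longrightarrow> \<phi> (t1 - t2) = \<phi> t1 - \<phi> t2"
  by (rule lin_on_diff[OF Cdual_lin_on]) (auto intro: MW_diff)

lemma dC_Cdual:
  assumes \<phi>: "\<phi> \<in> Cdual N R smult p"
  shows "dC N R smult lact ract p \<phi> \<in> Cdual N R smult (Suc p)"
proof -
  let ?MW = "MW N R smult (nu N (Suc p))" and ?bK = "bK_chain N lact ract (Suc p)"
  have "lin_on (msc smult) (*) ?MW (dC N R smult lact ract p \<phi>)"
    unfolding lin_on_def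
  proof (intro conjI ballI allI)
    fix x y assume x: "x \<in> ?MW" and y: "y \<in> ?MW"
    have "?bK (x + y) = ?bK x + ?bK y"
      using bK_chain_add MW_finite x y by blast
    then show "dC N R smult lact ract p \<phi> (x + y) = dC N R smult lact ract p \<phi> x + dC N R smult lact ract p \<phi> y"
      using x y MW_add Cdual_add[OF \<phi> bK_chain_MW[OF x] bK_chain_MW[OF y]]
      by (simp add: dC_def algebra_simps)
  next
    fix c x assume x: "x \<in> ?MW"
    have "?bK (msc smult c x) = msc smult c (?bK x)"
      using bK_chain_scale MW_finite x by blast
    then show "dC N R smult lact ract p \<phi> (msc smult c x) = c * dC N R smult lact ract p \<phi> x"
      using x MW_scale Cdual_scale[OF \<phi> bK_chain_MW[OF x]]
      by (simp add: dC_def algebra_simps)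
  qed
  then show ?thesis by (auto simp: Cdual_def dC_def)
qed

lemma eta_dC_apply:
  "w \<in> Wsp N R (nu N (Suc p)) \<Longrightarrow> eta N R smult (Suc p) (dC N R smult lact ract p \<phi>) w m
    = - ((-1) ^ p) * \<phi> (bK_chain N lact ract (Suc p) (mt smult m w))"
  by (simp add: eta_def dC_def mt_in_MW)

lemma eta_dC_even:
  assumes p: "even p" and \<phi>: "\<phi> \<in> Cdual N R smult p" and w: "w \<in> Wsp N R (nu N (Suc p))"
  shows "eta N R smult (Suc p) (dC N R smult lact ract p \<phi>) w m = dK N R lact ract p (eta N R smult p \<phi>) w m"
proof -
  have w': "w \<in> Wsp N R (length [x] + nu N p)" "w \<in> Wsp N R (nu N p + length [x])" for x
    using w nu_Suc_even[OF p] by simp_all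
  note left = Wsp_slice_left[OF R w'(1)] and right = Wsp_slice_right[OF R w'(2)]
  have "eta N R smult (Suc p) (dC N R smult lact ract p \<phi>) w m
      = - \<phi> ((\<Sum>x\<in>hd ` fsupp w. mt smult (ract x m) (slice [x] [] w))
              - (\<Sum>x\<in>last ` fsupp w. mt smult (lact x m) (slice [] [x] w)))"
    using p by (simp add: eta_dC_apply[OF w] bK_chain_mt_even[OF p w])
  also have "\<dots> = (\<Sum>x\<in>last ` fsupp w. \<phi> (mt smult (lact x m) (slice [] [x] w)))
      - (\<Sum>x\<in>hd ` fsupp w. \<phi> (mt smult (ract x m) (slice [x] [] w)))"
    by (simp add: Cdual_diff[OF \<phi>] Cdual_sum[OF \<phi>] MW_sum mt_in_MW left right)
  also have "\<dots> = dK N R lact ract p (eta N R smult p \<phi>) w m"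
    using w p by (simp add: dK_def bK_cochain_def sum_fun_apply dual_ract_def dual_lact_def eta_def
        left right)
  finally show ?thesis .
qed

lemma eta_dC_odd:
  assumes p: "odd p" and \<phi>: "\<phi> \<in> Cdual N R smult p" and w: "w \<in> Wsp N R (nu N (Suc p))"
  shows "eta N R smult (Suc p) (dC N R smult lact ract p \<phi>) w m = dK N R lact ract p (eta N R smult p \<phi>) w m"
proof -
  define K where "K i = (\<lambda>u. (take i u, drop (i + nu N p) u)) ` fsupp w" for i
  define X where "X a c = mt smult (lword lact c (rword ract a m)) (slice a c w)" for a c
  have slice: "slice a c w \<in> Wsp N R (nu N p)" if "i < N" "(a, c) \<in> K i" for i a c
    using that Wsp_slice_odd[OF p w] unfolding K_def by blast
  have X: "(\<lambda>(a, c). X a c) y \<in> MW N R smult (nu N p)" if "i < N" "y \<in> K i" for i y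
    using that slice unfolding X_def by (cases y) (auto intro: mt_in_MW)
  have "eta N R smult (Suc p) (dC N R smult lact ract p \<phi>) w m = \<phi> (\<Sum>i<N. \<Sum>(a, c)\<in>K i. X a c)"
    using p by (simp add: eta_dC_apply[OF w] bK_chain_mt_odd[OF p w] K_def X_def)
  also have "\<dots> = (\<Sum>i<N. \<phi> (\<Sum>(a, c)\<in>K i. X a c))"
    using X by (intro Cdual_sum[OF \<phi>] MW_sum) auto
  also have "\<dots> = (\<Sum>i<N. \<Sum>(a, c)\<in>K i. \<phi> (X a c))"
    using X by (intro sum.cong refl) (simp add: Cdual_sum[OF \<phi>] split_beta)
  also have "\<dots> = (\<Sum>i<N. \<Sum>(a, c)\<in>K i.
      lword (dual_lact ract) a (rword (dual_ract lact) c (eta N R smult p \<phi> (slice a c w))) m)"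
    using slice by (intro sum.cong refl)
      (auto simp: X_def lword_dual_lact rword_dual_ract eta_def)
  also have "\<dots> = dK N R lact ract p (eta N R smult p \<phi>) w m"
    using w p by (simp add: dK_def bK_cochain_def sum_fun_apply K_def split_beta)
  finally show ?thesis .
qed

lemma eta_dC:
  assumes "\<phi> \<in> Cdual N R smult p"
  shows "eta N R smult (Suc p) (dC N R smult lact ract p \<phi>) = dK N R lact ract p (eta N R smult p \<phi>)"
proof (intro ext)
  fix w m
  show "eta N R smult (Suc p) (dC N R smult lact ract p \<phi>) w m = dK N R lact ract p (eta N R smult p \<phi>) w m"
  proof (cases "w \<in> Wsp N R (nu N (Suc p))")
    case w: True
    show ?thesis
    proof (cases "even p")
      case True
      then show ?thesis by (rule eta_dC_even[OF _ assms w])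
    next
      case False
      then show ?thesis by (rule eta_dC_odd[OF _ assms w])
    qed
  qed (simp add: eta_def dK_def bK_cochain_def)
qed

lemma eta_Kcoch:
  assumes \<phi>: "\<phi> \<in> Cdual N R smult p"
  shows "eta N R smult p \<phi> \<in> Kcoch N R smult p"
proof -
  let ?W = "Wsp N R (nu N p)"
  have "lin_on sc (\<lambda>c u m. c * u m) ?W (eta N R smult p \<phi>)"
    unfolding lin_on_def
  proof (intro conjI ballI allI)
    fix x y assume x: "x \<in> ?W" and y: "y \<in> ?W"
    then show "eta N R smult p \<phi> (x + y) = eta N R smult p \<phi> x + eta N R smult p \<phi> y"
      using tensor.subspace_add[OF Wsp_subspace x y] Cdual_add[OF \<phi> mt_in_MW[OF x] mt_in_MW[OF y]]
      by (simp add: eta_def mt_add_tensor fun_eq_iff)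
  next
    fix c x assume x: "x \<in> ?W"
    then show "eta N R smult p \<phi> (sc c x) = (\<lambda>m. c * eta N R smult p \<phi> x m)"
      using tensor.subspace_scale[OF Wsp_subspace x] Cdual_scale[OF \<phi> mt_in_MW[OF x]]
      by (simp add: eta_def mt_scale_tensor fun_eq_iff)
  qed
  moreover have "eta N R smult p \<phi> w \<in> Mdual smult" if w: "w \<in> ?W" for w
  proof -
    have "lin_on smult (*) UNIV (\<lambda>m. \<phi> (mt smult m w))"
      unfolding lin_on_def
      using Cdual_add[OF \<phi> mt_in_MW[OF w] mt_in_MW[OF w]] Cdual_scale[OF \<phi> mt_in_MW[OF w]]
      by (simp add: mt_add_vector mt_scale_vector)
    then show ?thesis using w by (simp add: eta_def Mdual_def)
  qed
  ultimately show ?thesis by (simp add: Kcoch_def eta_def)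
qed

lemma eta_linear: "lin_on sc (\<lambda>c f w m. c * f w m) (Cdual N R smult p) (eta N R smult p)"
  by (auto simp: lin_on_def eta_def fun_eq_iff sc_def)

lemma eta_inj: "inj_on (eta N R smult p) (Cdual N R smult p)"
proof (rule inj_onI)
  fix \<phi>1 \<phi>2 assume \<phi>1: "\<phi>1 \<in> Cdual N R smult p" and \<phi>2: "\<phi>2 \<in> Cdual N R smult p"
    and eq: "eta N R smult p \<phi>1 = eta N R smult p \<phi>2"
  have "\<phi>1 t = \<phi>2 t" if "t \<in> MW N R smult (nu N p)" for t
    using that
  proof (induction rule: MW_induct)
    case zero
    show ?case by (simp only: Cdual_zero[OF \<phi>1] Cdual_zero[OF \<phi>2])
  next
    case (step c m w y)
    have x: "mt smult m w \<in> MW N R smult (nu N p)"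
      by (rule mt_in_MW[OF step.hyps(1)])
    have "\<phi>1 (mt smult m w) = \<phi>2 (mt smult m w)"
      using fun_cong[OF fun_cong[OF eq, of w], of m] step.hyps(1) by (simp add: eta_def)
    then show ?case
      by (simp only: Cdual_add[OF \<phi>1 MW_scale[OF x] step.hyps(2)] Cdual_add[OF \<phi>2 MW_scale[OF x] step.hyps(2)]
          Cdual_scale[OF \<phi>1 x] Cdual_scale[OF \<phi>2 x] step.IH)
  qed
  then show "\<phi>1 = \<phi>2"
    using Cdual_outside[OF \<phi>1] Cdual_outside[OF \<phi>2] by fastforce
qed

text \<open>The inverse of \<open>\<eta>\<close>: the functional \<open>m \<otimes> w \<mapsto> g w m\<close>, computed basis word by basis
  word, which is why \<open>g\<close> must first be extended from \<open>W\<close> to all tensors.\<close>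

definition adjunct :: "nat \<Rightarrow> (('x list \<Rightarrow> 'k) \<Rightarrow> 'm \<Rightarrow> 'k) \<Rightarrow> ('x list \<Rightarrow> 'm) \<Rightarrow> 'k" where
  "adjunct p g t = (if t \<in> MW N R smult (nu N p) then fsum (\<lambda>u. g (single u 1)) t else 0)"

lemma adjunct_Cdual:
  assumes g: "\<And>x. g x \<in> Mdual smult"
  shows "adjunct p g \<in> Cdual N R smult p"
proof -
  let ?MW = "MW N R smult (nu N p)" and ?G = "\<lambda>u. g (single u 1)"
  have add: "?G u (a + b) = ?G u a + ?G u b" and scale: "?G u (smult c a) = c * ?G u a" for u a b c
    using g unfolding Mdual_def lin_on_def by blast+
  have zero: "?G u 0 = 0" for u
    using Mdual_zero[OF g] .
  have "lin_on (msc smult) (*) ?MW (adjunct p g)"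
    unfolding lin_on_def
  proof (intro conjI ballI allI)
    fix x y assume "x \<in> ?MW" "y \<in> ?MW"
    then show "adjunct p g (x + y) = adjunct p g x + adjunct p g y"
      using MW_finite by (simp add: adjunct_def MW_add fsum_add add)
  next
    fix c x assume x: "x \<in> ?MW"
    have "fsum ?G (msc smult c x) = (\<Sum>u\<in>fsupp x. ?G u (msc smult c x u))"
      by (rule fsum_superset[OF MW_finite[OF x] fsupp_msc]) (rule zero)
    also have "\<dots> = c * fsum ?G x"
      by (simp add: fsum_def msc_def scale sum_distrib_left)
    finally show "adjunct p g (msc smult c x) = c * adjunct p g x"
      using x by (simp add: adjunct_def MW_scale)
  qed
  then show ?thesis by (simp add: Cdual_def adjunct_def)
qed

lemma eta_adjunct:
  assumes lin: "Vector_Spaces.linear sc sc g" and g: "\<And>x. g x \<in> Mdual smult"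
    and w: "w \<in> Wsp N R (nu N p)"
  shows "eta N R smult p (adjunct p g) w = g w"
proof
  fix m
  let ?G = "\<lambda>u. g (single u 1)"
  have scale: "?G u (smult c a) = c * ?G u a" for u a c
    using g[of "single u 1"] unfolding Mdual_def lin_on_def by blast
  have hom: "module_hom sc sc g" using lin by (simp add: module_hom_iff_linear)
  have "g w = g (\<Sum>u\<in>fsupp w. sc (w u) (single u 1))"
    by (simp only: sum_single_expansion[OF Wsp_finite[OF R w]])
  also have "\<dots> = (\<Sum>u\<in>fsupp w. sc (w u) (?G u))"
    by (simp only: module_hom.sum[OF hom] module_hom.scale[OF hom])
  finally have "g w m = (\<Sum>u\<in>fsupp w. w u * ?G u m)"
    by (simp add: sum_fun_apply sc_def)
  moreover have "eta N R smult p (adjunct p g) w m = (\<Sum>u\<in>fsupp w. ?G u (smult (w u) m))"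
    using w mt_in_MW[OF w] fsum_superset[OF Wsp_finite[OF R w] fsupp_mt, of ?G] Mdual_zero[OF g]
    by (simp add: eta_def adjunct_def mt_def)
  ultimately show "eta N R smult p (adjunct p g) w m = g w m"
    by (simp add: scale)
qed

lemma eta_surj:
  assumes f: "f \<in> Kcoch N R smult p"
  obtains \<phi> where "\<phi> \<in> Cdual N R smult p" "eta N R smult p \<phi> = f"
proof -
  let ?W = "Wsp N R (nu N p)"
  have lin: "lin_on sc sc ?W f" and dual: "f ` ?W \<subseteq> Mdual smult"
    and outside: "\<And>w. w \<notin> ?W \<Longrightarrow> f w = 0"
    using f by (auto simp: Kcoch_def sc_eq_lambda)
  obtain g where g: "Vector_Spaces.linear sc sc g" "\<And>w. w \<in> ?W \<Longrightarrow> g w = f w"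
    and range: "range g \<subseteq> tensor.span (f ` ?W)"
    using lin_on_extend[OF Wsp_subspace lin] by blast
  have "tensor.span (f ` ?W) \<subseteq> Mdual smult"
    by (rule tensor.span_minimal[OF dual Mdual_subspace])
  with range have gM: "g x \<in> Mdual smult" for x by blast
  have "eta N R smult p (adjunct p g) = f"
  proof
    fix w
    show "eta N R smult p (adjunct p g) w = f w"
    proof (cases "w \<in> ?W")
      case True
      then show ?thesis using eta_adjunct[OF g(1) gM True] g(2) by simp
    qed (simp add: eta_def outside)
  qed
  with adjunct_Cdual[OF gM] show ?thesis by (rule that)
qed

lemma eta_bij: "bij_betw (eta N R smult p) (Cdual N R smult p) (Kcoch N R smult p)"
proof -
  have "Kcoch N R smult p \<subseteq> eta N R smult p ` Cdual N R smult p"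
  proof
    fix f assume "f \<in> Kcoch N R smult p"
    then obtain \<phi> where "\<phi> \<in> Cdual N R smult p" "eta N R smult p \<phi> = f" by (rule eta_surj)
    then show "f \<in> eta N R smult p ` Cdual N R smult p" by blast
  qed
  moreover have "eta N R smult p ` Cdual N R smult p \<subseteq> Kcoch N R smult p"
    using eta_Kcoch by (rule image_subsetI)
  ultimately show ?thesis
    using eta_inj by (simp add: bij_betw_def subset_antisym)
qed

lemma eta_zero: "eta N R smult p 0 = 0"
  by (simp add: eta_def fun_eq_iff)

lemma zero_Cdual: "0 \<in> Cdual N R smult p"
  by (simp add: Cdual_def lin_on_def)

lemma zero_Kcoch: "0 \<in> Kcoch N R smult p"
  by (simp add: Kcoch_def lin_on_def Mdual_def zero_fun_def)

lemma dK_zero: "dK N R lact ract p 0 = 0"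
  by (auto simp: dK_def bK_cochain_def fun_eq_iff sum_fun_apply lword_dual_lact rword_dual_ract
      dual_lact_def dual_ract_def split_beta)

lemma cochain_iso_eta:
  "cochain_iso (Cdual N R smult) (dC N R smult lact ract) (Kcoch N R smult) (dK N R lact ract) (eta N R smult)"
  by unfold_locales (simp_all add: eta_bij eta_dC dC_Cdual eta_zero zero_Cdual dK_zero)

lemma eta_pullC:
  fixes smult' :: "'k \<Rightarrow> 'n::ab_group_add \<Rightarrow> 'n" and g :: "'m \<Rightarrow> 'n"
  assumes g: "lin_on smult smult' UNIV g"
  shows "eta N R smult p (pullC N R smult p g z) = pushK g (eta N R smult' p z)"
proof (intro ext)
  fix w :: "'x list \<Rightarrow> 'k" and m :: 'm
  have "g \<circ> mt smult m w = mt smult' (g m) w"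
    using g by (simp add: fun_eq_iff mt_def lin_on_def)
  then show "eta N R smult p (pullC N R smult p g z) w m = pushK g (eta N R smult' p z) w m"
    by (simp add: eta_def pullC_def pushK_def mt_in_MW)
qed

end

theorem proposition4p1:
  fixes N :: nat and R :: "('x list \<Rightarrow> 'k::field) set"
    and smult :: "'k \<Rightarrow> 'm::ab_group_add \<Rightarrow> 'm" and lact ract :: "'x \<Rightarrow> 'm \<Rightarrow> 'm"
    and smult' :: "'k \<Rightarrow> 'n::ab_group_add \<Rightarrow> 'n" and lact' ract' :: "'x \<Rightarrow> 'n \<Rightarrow> 'n"
  assumes "N \<ge> 2" and "tsubspace N R"
    and "bimod N R smult lact ract" and "bimod N R smult' lact' ract'"
  shows
    "(\<forall>p. bij_betw (eta N R smult p) (Cdual N R smult p) (Kcoch N R smult p)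
         \<and> lin_on sc (\<lambda>c f w m. c * f w m) (Cdual N R smult p) (eta N R smult p)
         \<and> (\<forall>\<phi>\<in>Cdual N R smult p.
              eta N R smult (Suc p) (dC N R smult lact ract p \<phi>)
              = dK N R lact ract p (eta N R smult p \<phi>)))
     \<and> (\<forall>p. induces_iso
            (cocycles (Cdual N R smult) (dC N R smult lact ract) p)
            (coboundaries (Cdual N R smult) (dC N R smult lact ract) p)
            (cocycles (Kcoch N R smult) (dK N R lact ract) p)
            (coboundaries (Kcoch N R smult) (dK N R lact ract) p)
            (eta N R smult p))
     \<and> (\<forall>g. bimod_hom smult lact ract smult' lact' ract' g \<longrightarrow>
          (\<forall>p. \<forall>z\<in>cocycles (Cdual N R smult') (dC N R smult' lact' ract') p.
             eta N R smult p (pullC N R smult p g z) - pushK g (eta N R smult' p z)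
               \<in> coboundaries (Kcoch N R smult) (dK N R lact ract) p))"
proof -
  interpret koszul_dual smult N R lact ract
    using assms by (simp add: koszul_dual_def koszul_dual_axioms_def bimod_def)
  interpret iso: cochain_iso "Cdual N R smult" "dC N R smult lact ract" "Kcoch N R smult"
      "dK N R lact ract" "eta N R smult"
    by (rule cochain_iso_eta)
  have "eta N R smult p (pullC N R smult p g z) - pushK g (eta N R smult' p z)
      \<in> coboundaries (Kcoch N R smult) (dK N R lact ract) p"
    if "bimod_hom smult lact ract smult' lact' ract' g" for g p z
  proof -
    have "eta N R smult p (pullC N R smult p g z) = pushK g (eta N R smult' p z)"
      using that by (intro eta_pullC) (simp add: bimod_hom_def)
    then show ?thesis
      using zero_in_coboundaries[of "Kcoch N R smult" p "dK N R lact ract", OF zero_Kcoch dK_zero]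
      by simp
  qed
  then show ?thesis
    using eta_bij eta_linear eta_dC iso.induces_iso by blast
qed

end
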